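(* Let $b\ge 2$ and $m\ge 0$ be integers. Consider the following nondeterministic procedure. Set $\mathcal U_1=[0,1)^2$. For $n=1,2,\ldots$: if $\mathcal U_n=\emptyset$, stop; otherwise choose an arbitrary box $X_n=\prod_{j=1}^2\left[\frac{u_j(n)}{b^m},\frac{u_j(n)+1}{b^m}\right)\subseteq \mathcal U_n$ with $u_j(n)\in\{0,1,\ldots,b^m-1\}$, and set $\mathcal U_{n+1}=\mathcal U_n\setminus\bigcup_{E\in\mathcal E_m(X_n)}E$. Then, regardless of the choices made, the procedure stops after at most $b^m$ boxes have been chosen.
   Context: An elementary $b$-adic interval in $[0,1)^s$ is a set $\prod_{j=1}^s\left[\frac{a_j}{b^{d_j}},\frac{a_j+1}{b^{d_j}}\right)$ with $d_j\in\mathbb N_0$ and $a_j\in\{0,1,\ldots,b^{d_j}-1\}$; its volume is $b^{-(d_1+\cdots+d_s)}$. For a box $X=\prod_{j=1}^s\left[\frac{u_j}{b^m},\frac{u_j+1}{b^m}\right)$, $\mathcal E_m(X)$ denotes the set of all elementary $b$-adic intervals of volume $b^{-m}$ that contain $X$ as a subset. *)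

theory Defs
  imports Complex_Main
begin

definition elem_int2 :: "nat \<Rightarrow> nat \<Rightarrow> nat \<Rightarrow> nat \<Rightarrow> nat \<Rightarrow> (real \<times> real) set" where
  "elem_int2 b d1 d2 a1 a2 =
     {real a1 / real b ^ d1 ..< (real a1 + 1) / real b ^ d1} \<times>
     {real a2 / real b ^ d2 ..< (real a2 + 1) / real b ^ d2}"

definition grid_box :: "nat \<Rightarrow> nat \<Rightarrow> nat \<times> nat \<Rightarrow> (real \<times> real) set" where
  "grid_box b m u = elem_int2 b m m (fst u) (snd u)"

text \<open>E_m(X): all elementary b-adic intervals of volume b^(-m) containing X
  (volume b^(-(d1+d2)) = b^(-m) means d1 + d2 = m since b >= 2).\<close>
definition E_m :: "nat \<Rightarrow> nat \<Rightarrow> (real \<times> real) set \<Rightarrow> (real \<times> real) set set" where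
  "E_m b m X = {E. \<exists>d1 d2 a1 a2. a1 < b ^ d1 \<and> a2 < b ^ d2 \<and> d1 + d2 = m \<and>
                   E = elem_int2 b d1 d2 a1 a2 \<and> X \<subseteq> E}"

text \<open>U_set b m u k is the paper's U_(k+1), given the choices u 1, u 2, ...:
  U_1 = [0,1)^2, U_(n+1) = U_n minus the union of E_m(X_n).\<close>
fun U_set :: "nat \<Rightarrow> nat \<Rightarrow> (nat \<Rightarrow> nat \<times> nat) \<Rightarrow> nat \<Rightarrow> (real \<times> real) set" where
  "U_set b m u 0 = {0..<1} \<times> {0..<1}"
| "U_set b m u (Suc n) = U_set b m u n - \<Union> (E_m b m (grid_box b m (u (Suc n))))"

end

theory Submission
  imports Defs
begin

text \<open>Each chosen box X lies in the full-height column with the same first coordinate, which is one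
  of the intervals of E_m(X) (exponents m and 0). Once that column has been removed from U, no later box
  can sit in it, so the first coordinates of the chosen boxes are pairwise distinct; there are only b^m
  of them.\<close>

definition column :: "nat \<Rightarrow> nat \<Rightarrow> nat \<Rightarrow> (real \<times> real) set" where
  "column b m a = elem_int2 b m 0 a 0"

lemma U_set_antimono: "n \<le> n' \<Longrightarrow> U_set b m u n' \<subseteq> U_set b m u n"
  by (induction n' rule: dec_induct) auto

lemma corner_in_grid_box:
  assumes "b > 0"
  shows "(real (fst v) / real b ^ m, real (snd v) / real b ^ m) \<in> grid_box b m v"
  using assms by (auto simp: grid_box_def elem_int2_def divide_strict_right_mono)

lemma grid_box_subset_column:
  assumes "b > 0" and "snd v < b ^ m"
  shows "grid_box b m v \<subseteq> column b m (fst v)"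
proof
  fix x assume "x \<in> grid_box b m v"
  then have lower: "real (snd v) / real b ^ m \<le> snd x"
    and upper: "snd x < (real (snd v) + 1) / real b ^ m"
    and fst_x: "fst x \<in> {real (fst v) / real b ^ m ..< (real (fst v) + 1) / real b ^ m}"
    unfolding grid_box_def elem_int2_def by auto
  have "real (snd v) + 1 \<le> real b ^ m"
    using assms(2) by (metis Suc_leI of_nat_Suc of_nat_le_iff of_nat_power add.commute)
  then have "(real (snd v) + 1) / real b ^ m \<le> 1"
    using assms(1) by simp
  moreover have "0 \<le> real (snd v) / real b ^ m"
    by simp
  ultimately have "0 \<le> snd x" "snd x < 1"
    using lower upper by linarith+
  then show "x \<in> column b m (fst v)"
    using fst_x by (cases x) (auto simp: column_def elem_int2_def)
qed

lemma column_mem_E_m: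
  assumes "b > 0" and "fst v < b ^ m" and "snd v < b ^ m"
  shows "column b m (fst v) \<in> E_m b m (grid_box b m v)"
  unfolding E_m_def column_def
proof (intro CollectI exI conjI)
  show "grid_box b m v \<subseteq> elem_int2 b m 0 (fst v) 0"
    using grid_box_subset_column[OF assms(1,3)] by (simp add: column_def)
qed (use assms(2) in auto)

lemma first_coordinates_distinct:
  assumes "b > 0"
    and admissible: "\<forall>n \<in> {1..N}. fst (u n) < b ^ m \<and> snd (u n) < b ^ m \<and>
                        grid_box b m (u n) \<subseteq> U_set b m u (n - 1)"
    and "1 \<le> n" "n < n'" "n' \<le> N"
  shows "fst (u n) \<noteq> fst (u n')"
proof
  assume same_column: "fst (u n) = fst (u n')"
  have box_n: "fst (u n) < b ^ m" "snd (u n) < b ^ m"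
    using admissible assms(3-5) by auto
  have box_n': "snd (u n') < b ^ m" "grid_box b m (u n') \<subseteq> U_set b m u (n' - 1)"
    using admissible assms(3-5) by auto
  have "U_set b m u (n' - 1) \<subseteq> U_set b m u (Suc (n - 1))"
    using assms(3,4) by (intro U_set_antimono) simp
  also have "\<dots> = U_set b m u (n - 1) - \<Union> (E_m b m (grid_box b m (u n)))"
    using assms(3) by (cases n) simp_all
  finally have "grid_box b m (u n') \<inter> column b m (fst (u n)) = {}"
    using box_n'(2) column_mem_E_m[OF assms(1) box_n] by blast
  moreover have "grid_box b m (u n') \<subseteq> column b m (fst (u n))"
    using grid_box_subset_column[OF assms(1) box_n'(1)] same_column by simp
  ultimately show False
    using corner_in_grid_box[OF assms(1)] by blast
qed

theorem mainTheorem2: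
  fixes b m N :: nat and u :: "nat \<Rightarrow> nat \<times> nat"
  assumes "b \<ge> 2"
    and "\<forall>n \<in> {1..N}. fst (u n) < b ^ m \<and> snd (u n) < b ^ m \<and>
                        grid_box b m (u n) \<subseteq> U_set b m u (n - 1)"
  shows "N \<le> b ^ m"
proof -
  have "b > 0" using assms(1) by simp
  have "inj_on (\<lambda>n. fst (u n)) {1..N}"
  proof (rule inj_onI)
    fix n n' assume "n \<in> {1..N}" "n' \<in> {1..N}" "fst (u n) = fst (u n')"
    then show "n = n'"
      using first_coordinates_distinct[OF \<open>b > 0\<close> assms(2)]
      by (metis atLeastAtMost_iff linorder_neqE_nat)
  qed
  moreover have "(\<lambda>n. fst (u n)) ` {1..N} \<subseteq> {..<b ^ m}"
    using assms(2) by auto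
  ultimately have "card {1..N} \<le> card {..<b ^ m}"
    by (intro card_inj_on_le) auto
  then show ?thesis by simp
qed

end
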